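(* For all $n\ge2$, $\mathfrak a_2^\pi(n)=\{g\in\mathfrak{so}(2^n): gZ^{\otimes n}=Z^{\otimes n}g\}$.
   Context: Pauli matrices $I,X,Y,Z$; $A_iB_j$ ($i\ne j$) denotes the length-$n$ Pauli string with $A$ at position $i$, $B$ at position $j$, $I$ elsewhere. $\mathfrak{so}(N)$ is the Lie algebra of real skew-symmetric $N\times N$ matrices. For a set $S$ of Pauli strings, $\mathrm{Lie}\langle S\rangle$ is the smallest real Lie subalgebra of $\mathfrak u(2^n)$ containing $\{iP:P\in S\}$. $\mathfrak a_2^\pi(n)=\mathrm{Lie}\langle X_iY_j,\,Y_iX_j:1\le i\ne j\le n\rangle$. *)

theory Defs
  imports Complex_Main "Jordan_Normal_Form.Matrix"
begin

datatype pauli = PI | PX | PY | PZ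

fun pauli_entry :: "pauli \<Rightarrow> nat \<Rightarrow> nat \<Rightarrow> complex" where
  "pauli_entry PI a b = (if a = b then 1 else 0)"
| "pauli_entry PX a b = (if a = b then 0 else 1)"
| "pauli_entry PY a b = (if a = b then 0 else if a = 0 then - \<i> else \<i>)"
| "pauli_entry PZ a b = (if a = b then (if a = 0 then 1 else -1) else 0)"

text \<open>Pauli string P_1 \<otimes> ... \<otimes> P_n as a 2^n x 2^n matrix; qubit k (1..n)
  corresponds to bit (k-1) of the row/column index.\<close>
definition pauli_string :: "nat \<Rightarrow> (nat \<Rightarrow> pauli) \<Rightarrow> complex mat" where
  "pauli_string n P = mat (2^n) (2^n)
     (\<lambda>(r, c). \<Prod>k\<in>{1..n}. pauli_entry (P k) ((r div 2^(k-1)) mod 2) ((c div 2^(k-1)) mod 2))"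

definition two_site :: "nat \<Rightarrow> pauli \<Rightarrow> nat \<Rightarrow> pauli \<Rightarrow> nat \<Rightarrow> complex mat" where
  "two_site n A i B j = pauli_string n (\<lambda>k. if k = i then A else if k = j then B else PI)"

definition Z_all :: "nat \<Rightarrow> complex mat" where
  "Z_all n = pauli_string n (\<lambda>k. PZ)"

inductive_set lie_closure :: "nat \<Rightarrow> complex mat set \<Rightarrow> complex mat set"
  for N :: nat and G :: "complex mat set" where
  gen: "A \<in> G \<Longrightarrow> A \<in> lie_closure N G"
| zero: "0\<^sub>m N N \<in> lie_closure N G"
| add: "A \<in> lie_closure N G \<Longrightarrow> B \<in> lie_closure N G \<Longrightarrow> A + B \<in> lie_closure N G"
| smult: "A \<in> lie_closure N G \<Longrightarrow> complex_of_real r \<cdot>\<^sub>m A \<in> lie_closure N G"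
| bracket: "A \<in> lie_closure N G \<Longrightarrow> B \<in> lie_closure N G \<Longrightarrow> A * B - B * A \<in> lie_closure N G"

definition Lie_gen :: "nat \<Rightarrow> complex mat set \<Rightarrow> complex mat set" where
  "Lie_gen n S = lie_closure (2^n) ((\<lambda>P. \<i> \<cdot>\<^sub>m P) ` S)"

definition a2pi :: "nat \<Rightarrow> complex mat set" where
  "a2pi n = Lie_gen n
     ({two_site n PX i PY j | i j. i \<in> {1..n} \<and> j \<in> {1..n} \<and> i \<noteq> j}
    \<union> {two_site n PY i PX j | i j. i \<in> {1..n} \<and> j \<in> {1..n} \<and> i \<noteq> j})"

definition so_mat :: "nat \<Rightarrow> complex mat set" where
  "so_mat N = {A \<in> carrier_mat N N. (\<forall>i<N. \<forall>j<N. A $$ (i, j) \<in> \<real>) \<and> transpose_mat A = - A}"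

end

theory Submission
  imports Defs
begin

text \<open>
  Index the standard basis of the n-qubit space by bit strings r < 2^n and write Z_S X_M for
  the matrix that flips the bits in M and then multiplies by the sign of Z_S. Up to a phase
  every Pauli string has this form. Z_S X_M is real, it is skew-symmetric iff |S \<inter> M| is odd,
  and it commutes with Z^n iff |M| is even; so the right-hand side is the real span of the
  Z_S X_M with |M| even and |S \<inter> M| odd. The generators i X_i Y_j are Z_j X_{i,j}. Two
  anticommuting Z_S X_M and Z_T X_M' have commutator \<plusminus>2 Z_(S \<triangle> T) X_(M \<triangle> M'), and an
  induction on |M| reaches every basis element of the right-hand side. Conversely, so(2^n)
  intersected with the centraliser of Z^n is a Lie algebra containing the generators.
\<close>

section \<open>Flipping bits\<close>

lemma less_power_iff_bits: "(m::nat) < 2^n \<longleftrightarrow> (\<forall>k\<ge>n. \<not> bit m k)"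
proof
  assume "m < 2^n"
  then have "take_bit n m = m" by (simp add: take_bit_nat_eq_self_iff)
  then show "\<forall>k\<ge>n. \<not> bit m k" by (metis bit_take_bit_iff not_le)
next
  assume h: "\<forall>k\<ge>n. \<not> bit m k"
  have "take_bit n m = m"
    using h by (intro bit_eqI) (metis bit_take_bit_iff not_less)
  then show "m < 2^n" by (simp add: take_bit_nat_eq_self_iff)
qed

lemma bits_differ:
  assumes "(t::nat) < 2^n" "r < 2^n" "t \<noteq> r"
  obtains k where "k < n" "bit t k \<noteq> bit r k"
proof -
  obtain k where k: "bit t k \<noteq> bit r k" using assms(3) bit_eq_iff by blast
  moreover have "k < n"
    using k assms(1,2) by (metis less_power_iff_bits not_less)
  ultimately show thesis using that by blast
qed

definition bit_mask :: "nat set \<Rightarrow> nat" where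
  "bit_mask M = (\<Sum>k\<in>M. 2^k)"

lemma bit_bit_mask: "finite M \<Longrightarrow> bit (bit_mask M) k \<longleftrightarrow> k \<in> M"
proof (induction M arbitrary: k rule: finite_induct)
  case empty then show ?case by (simp add: bit_mask_def)
next
  case (insert a M)
  have "bit_mask (insert a M) = 2^a + bit_mask M" using insert by (simp add: bit_mask_def)
  also have "\<dots> = or (2^a) (bit_mask M)"
    by (rule disjunctive_add) (use insert in \<open>auto simp: bit_exp_iff\<close>)
  finally show ?case using insert by (auto simp: bit_or_iff bit_exp_iff)
qed

definition flip_bits :: "nat set \<Rightarrow> nat \<Rightarrow> nat" where
  "flip_bits M r = xor r (bit_mask M)"

lemma bit_flip_bits: "finite M \<Longrightarrow> bit (flip_bits M r) k \<longleftrightarrow> (bit r k \<noteq> (k \<in> M))"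
  by (simp add: flip_bits_def bit_xor_iff bit_bit_mask)

lemma flip_bits_empty [simp]: "flip_bits {} r = r"
  by (simp add: flip_bits_def bit_mask_def)

lemma flip_bits_less: "M \<subseteq> {..<n} \<Longrightarrow> r < 2^n \<Longrightarrow> flip_bits M r < 2^n"
  using finite_subset[of M "{..<n}"] by (auto simp: less_power_iff_bits bit_flip_bits)

lemma flip_bits_flip_bits:
  "finite M \<Longrightarrow> finite M' \<Longrightarrow> flip_bits M (flip_bits M' c) = flip_bits (sym_diff M M') c"
  by (rule bit_eqI) (auto simp: bit_flip_bits)

lemma flip_bits_involutive [simp]: "finite M \<Longrightarrow> flip_bits M (flip_bits M c) = c"
  by (rule bit_eqI) (auto simp: bit_flip_bits)

lemma flip_bits_eq_iff:
  assumes M: "M \<subseteq> {..<n}" and "r < 2^n" "c < 2^n"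
  shows "r = flip_bits M c \<longleftrightarrow> (\<forall>k<n. (bit r k \<noteq> bit c k) \<longleftrightarrow> k \<in> M)"
proof -
  have f: "finite M" using M finite_subset by blast
  have "r = flip_bits M c \<longleftrightarrow> (\<forall>k. bit r k \<longleftrightarrow> bit (flip_bits M c) k)" by (simp add: bit_eq_iff)
  also have "\<dots> \<longleftrightarrow> (\<forall>k<n. (bit r k \<noteq> bit c k) \<longleftrightarrow> k \<in> M)"
    using assms f by (auto simp: bit_flip_bits less_power_iff_bits) (metis lessThan_iff not_le subsetD)+
  finally show ?thesis .
qed

section \<open>Characters of the bit strings\<close>

definition z_sign :: "nat set \<Rightarrow> nat \<Rightarrow> complex" where
  "z_sign S r = (\<Prod>k\<in>S. if bit r k then -1 else 1)"

definition parity_sign :: "nat set \<Rightarrow> complex" where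
  "parity_sign A = (-1) ^ card A"

lemma parity_sign_if: "parity_sign A = (if even (card A) then 1 else -1)"
  by (simp add: parity_sign_def minus_one_power_iff)

lemma z_sign_real: "z_sign S r \<in> \<real>"
  unfolding z_sign_def by (intro prod_in_Reals) auto

lemma z_sign_nonzero: "z_sign S r \<noteq> 0"
  unfolding z_sign_def by (cases "finite S") (auto simp: prod_zero_iff)

lemma z_sign_flip_bits:
  assumes "finite S" "finite M"
  shows "z_sign S (flip_bits M r) = parity_sign (S \<inter> M) * z_sign S r"
proof -
  have "z_sign S (flip_bits M r)
      = (\<Prod>k\<in>S. (if k \<in> M then -1 else 1) * (if bit r k then -1 else (1::complex)))"
    unfolding z_sign_def using assms by (intro prod.cong) (auto simp: bit_flip_bits)
  also have "\<dots> = (\<Prod>k\<in>S. if k \<in> M then -1 else (1::complex)) * z_sign S r"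
    by (simp add: prod.distrib z_sign_def)
  also have "(\<Prod>k\<in>S. if k \<in> M then -1 else (1::complex)) = parity_sign (S \<inter> M)"
    using assms by (simp add: prod.If_cases parity_sign_def Int_def)
  finally show ?thesis .
qed

lemma z_sign_mult:
  assumes "finite S" "finite T"
  shows "z_sign S r * z_sign T r = z_sign (sym_diff S T) r"
proof -
  define g where "g k = (if bit r k then -1 else (1::complex))" for k
  have g_sq: "g k * g k = 1" for k by (simp add: g_def)
  have "z_sign S r = prod g (S \<inter> T) * prod g (S - T)"
    unfolding z_sign_def g_def using assms by (simp add: prod.Int_Diff[symmetric])
  moreover have "z_sign T r = prod g (S \<inter> T) * prod g (T - S)"
    unfolding z_sign_def g_def using assms by (metis Int_commute prod.Int_Diff)
  moreover have "z_sign (sym_diff S T) r = prod g (S - T) * prod g (T - S)"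
    unfolding z_sign_def g_def using assms by (subst prod.union_disjoint) auto
  moreover have "prod g (S \<inter> T) * prod g (S \<inter> T) = 1"
    by (simp add: prod.distrib[symmetric] g_sq)
  ultimately show ?thesis by (simp add: algebra_simps)
qed

lemma z_sign_orthogonal:
  assumes t: "t < 2^n" and r: "r < 2^n"
  shows "(\<Sum>S\<in>Pow {..<n}. z_sign S t * z_sign S r) = (if t = r then 2^n else 0)"
proof -
  define w where "w k = (if bit t k then -1 else (1::complex)) * (if bit r k then -1 else 1)" for k
  have "(\<Sum>S\<in>Pow {..<n}. z_sign S t * z_sign S r)
      = (\<Sum>S\<in>Pow {..<n}. (\<Prod>k\<in>S. w k) * (\<Prod>k\<in>{..<n}-S. 1))"
    unfolding z_sign_def w_def by (simp add: prod.distrib)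
  also have "\<dots> = (\<Prod>k<n. w k + 1)" by (rule prod_add[symmetric]) simp
  also have "\<dots> = (if t = r then 2^n else 0)"
  proof (cases "t = r")
    case True
    then have "w k + 1 = 2" for k by (simp add: w_def)
    then show ?thesis using True by simp
  next
    case False
    then obtain k where "k < n" "bit t k \<noteq> bit r k" using bits_differ t r by blast
    then have "k < n" "w k + 1 = 0" by (auto simp: w_def)
    then show ?thesis using False by (auto simp: prod_zero_iff)
  qed
  finally show ?thesis .
qed

definition z_coeff :: "nat \<Rightarrow> (nat \<Rightarrow> complex) \<Rightarrow> nat set \<Rightarrow> complex" where
  "z_coeff n \<phi> S = (\<Sum>t<2^n. \<phi> t * z_sign S t) / 2^n"

lemma z_coeff_real: "(\<And>t. t < 2^n \<Longrightarrow> \<phi> t \<in> \<real>) \<Longrightarrow> z_coeff n \<phi> S \<in> \<real>"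
  unfolding z_coeff_def using z_sign_real by (intro Reals_divide sum_in_Reals Reals_mult) auto

lemma z_sign_expansion:
  assumes r: "r < 2^n"
  shows "\<phi> r = (\<Sum>S\<in>Pow {..<n}. z_coeff n \<phi> S * z_sign S r)"
proof -
  have "(\<Sum>S\<in>Pow {..<n}. z_coeff n \<phi> S * z_sign S r)
      = (\<Sum>S\<in>Pow {..<n}. \<Sum>t<2^n. \<phi> t * (z_sign S t * z_sign S r) / 2^n)"
    unfolding z_coeff_def by (simp add: sum_divide_distrib sum_distrib_right mult.assoc)
  also have "\<dots> = (\<Sum>t<2^n. \<phi> t * (\<Sum>S\<in>Pow {..<n}. z_sign S t * z_sign S r) / 2^n)"
    by (subst sum.swap) (simp add: sum_divide_distrib sum_distrib_left)
  also have "\<dots> = (\<Sum>t<2^n. if t = r then \<phi> r else 0)"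
    using r by (intro sum.cong refl) (simp add: z_sign_orthogonal)
  also have "\<dots> = \<phi> r" using r by simp
  finally show ?thesis by simp
qed


section \<open>Matrices that flip a fixed set of bits\<close>

text \<open>\<open>diag_flip N \<phi> M = diag \<phi> * X_M\<close>; in particular \<open>diag_flip (2^n) (z_sign S) M = Z_S X_M\<close>.\<close>

definition diag_flip :: "nat \<Rightarrow> (nat \<Rightarrow> complex) \<Rightarrow> nat set \<Rightarrow> complex mat" where
  "diag_flip N \<phi> M = mat N N (\<lambda>(r,c). if r = flip_bits M c then \<phi> r else 0)"

lemma diag_flip_carrier [simp]: "diag_flip N \<phi> M \<in> carrier_mat N N"
  and diag_flip_dim [simp]: "dim_row (diag_flip N \<phi> M) = N" "dim_col (diag_flip N \<phi> M) = N"
  by (auto simp: diag_flip_def)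

lemma diag_flip_index:
  "r < N \<Longrightarrow> c < N \<Longrightarrow> diag_flip N \<phi> M $$ (r,c) = (if r = flip_bits M c then \<phi> r else 0)"
  by (simp add: diag_flip_def)

lemma diag_flip_cong: "(\<And>r. r < N \<Longrightarrow> \<phi> r = \<psi> r) \<Longrightarrow> diag_flip N \<phi> M = diag_flip N \<psi> M"
  by (rule eq_matI) (auto simp: diag_flip_index)

lemma diag_flip_diff: "diag_flip N \<phi> M - diag_flip N \<psi> M = diag_flip N (\<lambda>r. \<phi> r - \<psi> r) M"
  by (rule eq_matI) (auto simp: diag_flip_index)

lemma diag_flip_smult: "a \<cdot>\<^sub>m diag_flip N \<phi> M = diag_flip N (\<lambda>r. a * \<phi> r) M"
  by (rule eq_matI) (auto simp: diag_flip_index)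

lemma diag_flip_zero: "diag_flip N (\<lambda>r. 0) M = 0\<^sub>m N N"
  by (rule eq_matI) (auto simp: diag_flip_index)

lemma diag_flip_empty: "diag_flip N \<phi> {} = mat_diag N \<phi>"
  by (rule eq_matI) (auto simp: diag_flip_index mat_diag_def)

lemma diag_flip_mult:
  assumes M: "M \<subseteq> {..<n}" "M' \<subseteq> {..<n}"
  shows "diag_flip (2^n) \<phi> M * diag_flip (2^n) \<psi> M'
       = diag_flip (2^n) (\<lambda>r. \<phi> r * \<psi> (flip_bits M r)) (sym_diff M M')"
    (is "?A * ?B = ?C")
proof (rule eq_matI)
  have f: "finite M" "finite M'" using M finite_subset by blast+
  fix r c assume "r < dim_row ?C" "c < dim_col ?C"
  then have r: "r < 2^n" and c: "c < 2^n" by auto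
  have "(?A * ?B) $$ (r,c) = (\<Sum>t\<in>{0..<2^n}. ?A $$ (r,t) * ?B $$ (t,c))"
    using r c by (simp add: scalar_prod_def)
  also have "\<dots> = (\<Sum>t\<in>{0..<2^n}.
      if t = flip_bits M' c then (if r = flip_bits M t then \<phi> r else 0) * \<psi> t else 0)"
    using r c by (intro sum.cong) (auto simp: diag_flip_index)
  also have "\<dots> = (if r = flip_bits M (flip_bits M' c) then \<phi> r else 0) * \<psi> (flip_bits M' c)"
    using flip_bits_less[OF M(2) c] by simp
  also have "\<dots> = ?C $$ (r,c)"
  proof (cases "r = flip_bits M (flip_bits M' c)")
    case True
    then have "flip_bits M r = flip_bits M' c" using f by simp
    then show ?thesis using True r c f by (simp add: diag_flip_index flip_bits_flip_bits)
  qed (use r c f in \<open>simp add: diag_flip_index flip_bits_flip_bits\<close>)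
  finally show "(?A * ?B) $$ (r,c) = ?C $$ (r,c)" .
qed auto

lemma diag_flip_decomposition:
  assumes g: "g \<in> carrier_mat (2^n) (2^n)"
  shows "g = mat (2^n) (2^n)
    (\<lambda>rc. \<Sum>M\<in>Pow {..<n}. diag_flip (2^n) (\<lambda>r. g $$ (r, flip_bits M r)) M $$ rc)"
proof (rule eq_matI)
  fix r c assume "r < dim_row (mat (2^n) (2^n)
    (\<lambda>rc. \<Sum>M\<in>Pow {..<n}. diag_flip (2^n) (\<lambda>r. g $$ (r, flip_bits M r)) M $$ rc))"
    "c < dim_col (mat (2^n) (2^n)
    (\<lambda>rc. \<Sum>M\<in>Pow {..<n}. diag_flip (2^n) (\<lambda>r. g $$ (r, flip_bits M r)) M $$ rc))"
  then have r: "r < 2^n" and c: "c < 2^n" by auto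
  define D where "D = {k. k < n \<and> bit r k \<noteq> bit c k}"
  have D: "D \<in> Pow {..<n}" by (auto simp: D_def)
  have flip_iff: "r = flip_bits M c \<longleftrightarrow> M = D" if "M \<in> Pow {..<n}" for M
    using flip_bits_eq_iff[of M n r c] that r c by (auto simp: D_def)
  have "r = flip_bits D c" using flip_iff D by simp
  then have "c = flip_bits D r" using D finite_subset[of D "{..<n}"] by auto
  then have "g $$ (r,c)
      = (\<Sum>M\<in>Pow {..<n}. if M = D then g $$ (r, flip_bits M r) else 0)"
    using D by simp
  also have "\<dots> = (\<Sum>M\<in>Pow {..<n}. diag_flip (2^n) (\<lambda>r. g $$ (r, flip_bits M r)) M $$ (r,c))"
    using r c flip_iff by (intro sum.cong refl) (simp add: diag_flip_index)
  finally show "g $$ (r,c) = mat (2^n) (2^n)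
    (\<lambda>rc. \<Sum>M\<in>Pow {..<n}. diag_flip (2^n) (\<lambda>r. g $$ (r, flip_bits M r)) M $$ rc) $$ (r,c)"
    using r c by simp
qed (use g in auto)

section \<open>Pauli strings\<close>

fun pauli_flips :: "pauli \<Rightarrow> bool" where
  "pauli_flips PI = False" | "pauli_flips PX = True" | "pauli_flips PY = True"
| "pauli_flips PZ = False"

fun pauli_phase :: "pauli \<Rightarrow> nat \<Rightarrow> complex" where
  "pauli_phase PI a = 1" | "pauli_phase PX a = 1" | "pauli_phase PY a = (if a = 0 then - \<i> else \<i>)"
| "pauli_phase PZ a = (if a = 0 then 1 else -1)"

lemma pauli_entry_eq:
  "a < 2 \<Longrightarrow> b < 2 \<Longrightarrow>
     pauli_entry p a b = (if (a \<noteq> b) = pauli_flips p then pauli_phase p a else 0)"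
  by (cases p) auto

lemma div_power_mod_2: "((r::nat) div 2^k) mod 2 = (if bit r k then 1 else 0)"
  by (simp add: bit_iff_odd odd_iff_mod_2_eq_one)

lemma pauli_string_diag_flip:
  "pauli_string n P = diag_flip (2^n) (\<lambda>r. \<Prod>k<n. pauli_phase (P (Suc k)) ((r div 2^k) mod 2))
     {k. k < n \<and> pauli_flips (P (Suc k))}"
    (is "_ = diag_flip _ ?\<phi> ?M")
proof (rule eq_matI)
  fix r c assume "r < dim_row (diag_flip (2^n) ?\<phi> ?M)" "c < dim_col (diag_flip (2^n) ?\<phi> ?M)"
  then have r: "r < 2^n" and c: "c < 2^n" by auto
  have M: "?M \<subseteq> {..<n}" by auto
  have "pauli_string n P $$ (r,c) = (\<Prod>k<n. pauli_entry (P (Suc k)) ((r div 2^k) mod 2) ((c div 2^k) mod 2))"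
    using r c by (simp add: pauli_string_def prod.atLeast1_atMost_eq)
  also have "\<dots> = (\<Prod>k<n. if (bit r k \<noteq> bit c k) = pauli_flips (P (Suc k))
                           then pauli_phase (P (Suc k)) ((r div 2^k) mod 2) else 0)"
    by (intro prod.cong refl) (simp add: pauli_entry_eq div_power_mod_2)
  also have "\<dots> = (if r = flip_bits ?M c then ?\<phi> r else 0)"
  proof (cases "r = flip_bits ?M c")
    case True
    then have "\<forall>k<n. (bit r k \<noteq> bit c k) \<longleftrightarrow> pauli_flips (P (Suc k))"
      using flip_bits_eq_iff[OF M r c] by simp
    then show ?thesis using True by (auto intro: prod.cong)
  next
    case False
    then obtain k where "k < n" "(bit r k \<noteq> bit c k) \<noteq> pauli_flips (P (Suc k))"
      using flip_bits_eq_iff[OF M r c] by auto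
    then show ?thesis using False by (auto simp: prod_zero_iff)
  qed
  finally show "pauli_string n P $$ (r,c) = diag_flip (2^n) ?\<phi> ?M $$ (r,c)"
    using r c by (simp add: diag_flip_index)
qed (auto simp: pauli_string_def)

lemma Z_all_eq_mat_diag: "Z_all n = mat_diag (2^n) (z_sign {..<n})"
proof -
  have "(\<Prod>k<n. pauli_phase PZ (r div 2 ^ k mod 2)) = z_sign {..<n} r" for r
    unfolding z_sign_def by (rule prod.cong) (auto simp: div_power_mod_2)
  then show ?thesis
    unfolding Z_all_def pauli_string_diag_flip by (simp add: diag_flip_empty)
qed

lemma two_site_swap: "i \<noteq> j \<Longrightarrow> two_site n A i B j = two_site n B j A i"
  unfolding two_site_def by (intro arg_cong[where f = "pauli_string n"] ext) auto

text \<open>Since \<open>i Y = Z X\<close>, \<open>i X_i Y_j = Z_j X_i X_j\<close>; qubit \<open>k\<close> is stored in bit \<open>k - 1\<close>.\<close>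

lemma i_two_site_XY:
  assumes "i \<in> {1..n}" "j \<in> {1..n}" "i \<noteq> j"
  shows "\<i> \<cdot>\<^sub>m two_site n PX i PY j = diag_flip (2^n) (z_sign {j-1}) {i-1, j-1}"
proof -
  define Q where "Q k = (if Suc k = i then PX else if Suc k = j then PY else PI)" for k
  have M: "{k. k < n \<and> pauli_flips ((\<lambda>k. if k = i then PX else if k = j then PY else PI) (Suc k))}
      = {i-1, j-1}"
    using assms by auto
  have "(\<Prod>k<n. pauli_phase (Q k) ((r div 2^k) mod 2))
      = pauli_phase (Q (j-1)) ((r div 2^(j-1)) mod 2)" for r
  proof -
    have "j - 1 < n" using assms by auto
    then have "(\<Prod>k<n. pauli_phase (Q k) ((r div 2^k) mod 2))
        = pauli_phase (Q (j-1)) ((r div 2^(j-1)) mod 2)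
          * (\<Prod>k\<in>{..<n} - {j-1}. pauli_phase (Q k) ((r div 2^k) mod 2))"
      by (subst prod.remove[of _ "j-1"]) auto
    also have "(\<Prod>k\<in>{..<n} - {j-1}. pauli_phase (Q k) ((r div 2^k) mod 2)) = 1"
      using assms by (intro prod.neutral) (auto simp: Q_def)
    finally show ?thesis by simp
  qed
  then have "\<i> * (\<Prod>k<n. pauli_phase (Q k) ((r div 2^k) mod 2)) = z_sign {j-1} r" for r
    using assms by (simp add: Q_def z_sign_def div_power_mod_2)
  then show ?thesis
    unfolding two_site_def pauli_string_diag_flip diag_flip_smult M
    by (intro diag_flip_cong) (simp add: Q_def)
qed


section \<open>The real skew-symmetric centraliser of a matrix\<close>

lemma so_mat_iff:
  "g \<in> so_mat N \<longleftrightarrow>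
     g \<in> carrier_mat N N \<and> (\<forall>r<N. \<forall>c<N. g $$ (r,c) \<in> \<real> \<and> g $$ (c,r) = - g $$ (r,c))"
proof (cases "g \<in> carrier_mat N N")
  case True
  then have "transpose_mat g = - g \<longleftrightarrow> (\<forall>r<N. \<forall>c<N. g $$ (c,r) = - g $$ (r,c))"
    by (simp add: mat_eq_iff)
  then show ?thesis unfolding so_mat_def using True by blast
qed (simp add: so_mat_def)

lemma so_matD:
  assumes "A \<in> so_mat N" "r < N" "c < N"
  shows "A $$ (r,c) \<in> \<real>" "A $$ (c,r) = - A $$ (r,c)"
  using assms unfolding so_mat_iff by blast+

lemma so_mat_add:
  assumes A: "A \<in> so_mat N" and B: "B \<in> so_mat N"
  shows "A + B \<in> so_mat N"
proof (unfold so_mat_iff, intro conjI allI impI)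
  have Bc: "B \<in> carrier_mat N N" using B by (simp add: so_mat_def)
  then show "A + B \<in> carrier_mat N N" using A by (simp add: so_mat_def)
  fix r c assume rc: "r < N" "c < N"
  then show "(A + B) $$ (r,c) \<in> \<real>" "(A + B) $$ (c,r) = - (A + B) $$ (r,c)"
    using Bc so_matD[OF A rc] so_matD[OF B rc] by auto
qed

lemma so_mat_smult:
  assumes A: "A \<in> so_mat N"
  shows "complex_of_real x \<cdot>\<^sub>m A \<in> so_mat N"
proof (unfold so_mat_iff, intro conjI allI impI)
  have Ac: "A \<in> carrier_mat N N" using A by (simp add: so_mat_def)
  then show "complex_of_real x \<cdot>\<^sub>m A \<in> carrier_mat N N" by simp
  fix r c assume rc: "r < N" "c < N"
  then show "(complex_of_real x \<cdot>\<^sub>m A) $$ (r,c) \<in> \<real>"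
    "(complex_of_real x \<cdot>\<^sub>m A) $$ (c,r) = - (complex_of_real x \<cdot>\<^sub>m A) $$ (r,c)"
    using Ac so_matD[OF A rc] by auto
qed

lemma so_mat_bracket:
  assumes A: "A \<in> so_mat N" and B: "B \<in> so_mat N"
  shows "A * B - B * A \<in> so_mat N"
proof -
  have Ac: "A \<in> carrier_mat N N" and Bc: "B \<in> carrier_mat N N"
    and At: "transpose_mat A = - A" and Bt: "transpose_mat B = - B"
    using A B by (auto simp: so_mat_def)
  have real: "(X * Y) $$ (r,c) \<in> \<real>"
    if "X \<in> so_mat N" "Y \<in> so_mat N" "r < N" "c < N" for X Y r c
  proof -
    have "X \<in> carrier_mat N N" "Y \<in> carrier_mat N N" using that by (auto simp: so_mat_def)
    then have "(X * Y) $$ (r,c) = (\<Sum>t<N. X $$ (r,t) * Y $$ (t,c))"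
      using that by (simp add: scalar_prod_def atLeast0LessThan)
    also have "\<dots> \<in> \<real>"
      using that unfolding so_mat_def by (intro sum_in_Reals Reals_mult) auto
    finally show ?thesis .
  qed
  have "transpose_mat (A * B - B * A) = (- B) * (- A) - (- A) * (- B)"
    using Ac Bc by (simp add: transpose_minus[of _ N N] transpose_mult[of _ N N _ N] At Bt)
  also have "\<dots> = - (A * B - B * A)"
    using Ac Bc by (intro eq_matI) auto
  finally show ?thesis
    using Ac Bc real[OF A B] real[OF B A] by (auto simp: so_mat_def)
qed

lemma commute_bracket:
  fixes A B Z :: "'a :: ring mat"
  assumes A: "A \<in> carrier_mat N N" and B: "B \<in> carrier_mat N N" and Z: "Z \<in> carrier_mat N N"
    and AZ: "A * Z = Z * A" and BZ: "B * Z = Z * B"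
  shows "(A * B - B * A) * Z = Z * (A * B - B * A)"
proof -
  have swap: "X * (Y * Z) = Z * (X * Y)" if X: "X \<in> carrier_mat N N" "X * Z = Z * X"
    and Y: "Y \<in> carrier_mat N N" "Y * Z = Z * Y" for X Y
    using X Y Z by (metis assoc_mult_mat)
  have "(A * B - B * A) * Z = A * (B * Z) - B * (A * Z)"
    using A B Z
    by (simp add: minus_mult_distrib_mat[OF mult_carrier_mat[OF A B] mult_carrier_mat[OF B A] Z])
  also have "\<dots> = Z * (A * B - B * A)"
    using A B Z swap[OF A AZ B BZ] swap[OF B BZ A AZ]
    by (simp add: mult_minus_distrib_mat[OF Z mult_carrier_mat[OF A B] mult_carrier_mat[OF B A]])
  finally show ?thesis .
qed

lemma lie_closure_subset_so_centraliser:
  fixes Z :: "complex mat"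
  assumes Z: "Z \<in> carrier_mat N N" and G: "G \<subseteq> {g \<in> so_mat N. g * Z = Z * g}"
  shows "lie_closure N G \<subseteq> {g \<in> so_mat N. g * Z = Z * g}"
proof
  fix A assume "A \<in> lie_closure N G"
  then show "A \<in> {g \<in> so_mat N. g * Z = Z * g}"
  proof induction
    case (add A B)
    then have "A \<in> carrier_mat N N" "B \<in> carrier_mat N N" by (auto simp: so_mat_def)
    with add Z show ?case by (auto simp: so_mat_add add_mult_distrib_mat mult_add_distrib_mat)
  next
    case (smult A r)
    then have "A \<in> carrier_mat N N" by (auto simp: so_mat_def)
    with smult Z show ?case by (auto simp: so_mat_smult mult_smult_distrib mult_smult_assoc_mat)
  next
    case (bracket A B)
    then have "A \<in> carrier_mat N N" "B \<in> carrier_mat N N" by (auto simp: so_mat_def)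
    with bracket Z show ?case by (auto simp: so_mat_bracket commute_bracket)
  qed (use G Z in \<open>auto simp: so_mat_def\<close>)
qed

lemma commute_mat_diag_iff:
  fixes f :: "nat \<Rightarrow> 'a :: idom"
  assumes g: "g \<in> carrier_mat N N"
  shows "g * mat_diag N f = mat_diag N f * g \<longleftrightarrow> (\<forall>r<N. \<forall>c<N. f r \<noteq> f c \<longrightarrow> g $$ (r,c) = 0)"
proof -
  have "g * mat_diag N f = mat_diag N f * g \<longleftrightarrow>
      (\<forall>r<N. \<forall>c<N. g $$ (r,c) * f c = f r * g $$ (r,c))"
    using g by (auto simp: mat_diag_mult_left mat_diag_mult_right mat_eq_iff)
  also have "\<dots> \<longleftrightarrow> (\<forall>r<N. \<forall>c<N. f r \<noteq> f c \<longrightarrow> g $$ (r,c) = 0)"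
    by (metis mult.commute mult_cancel_left)
  finally show ?thesis .
qed

lemma z_flip_in_so_centraliser:
  assumes S: "S \<subseteq> {..<n}" and M: "M \<subseteq> {..<n}"
    and SM: "odd (card (S \<inter> M))" and "even (card M)"
  shows "diag_flip (2^n) (z_sign S) M \<in> so_mat (2^n)"
    and "diag_flip (2^n) (z_sign S) M * Z_all n = Z_all n * diag_flip (2^n) (z_sign S) M"
proof -
  have f: "finite S" "finite M" using S M finite_subset by blast+
  show "diag_flip (2^n) (z_sign S) M \<in> so_mat (2^n)"
  proof (unfold so_mat_iff, intro conjI allI impI)
    fix r c :: nat assume r: "r < 2^n" and c: "c < 2^n"
    show "diag_flip (2^n) (z_sign S) M $$ (r,c) \<in> \<real>"
      using r c z_sign_real by (simp add: diag_flip_index)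
    have "z_sign S (flip_bits M r) = - z_sign S r"
      using f SM by (simp add: z_sign_flip_bits parity_sign_if)
    moreover have "r = flip_bits M c \<longleftrightarrow> c = flip_bits M r" using f by auto
    ultimately show "diag_flip (2^n) (z_sign S) M $$ (c,r) = - diag_flip (2^n) (z_sign S) M $$ (r,c)"
      using r c by (auto simp: diag_flip_index)
  qed simp
  have "z_sign {..<n} (flip_bits M c) = z_sign {..<n} c" for c
    using f M \<open>even (card M)\<close> by (simp add: z_sign_flip_bits parity_sign_if Int_absorb1)
  then show "diag_flip (2^n) (z_sign S) M * Z_all n = Z_all n * diag_flip (2^n) (z_sign S) M"
    unfolding Z_all_eq_mat_diag by (subst commute_mat_diag_iff) (auto simp: diag_flip_index)
qed


section \<open>Generating the matrices \<open>Z_S X_M\<close>\<close>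

lemma lie_closure_entrywise_sum:
  assumes "finite I" "\<And>i. i \<in> I \<Longrightarrow> X i \<in> lie_closure N G"
    "\<And>i. i \<in> I \<Longrightarrow> X i \<in> carrier_mat N N"
  shows "mat N N (\<lambda>rc. \<Sum>i\<in>I. X i $$ rc) \<in> lie_closure N G"
  using assms
proof (induction I rule: finite_induct)
  case empty
  have "mat N N (\<lambda>rc. \<Sum>i\<in>{}. X i $$ rc) = 0\<^sub>m N N" by (rule eq_matI) auto
  then show ?case using lie_closure.zero by simp
next
  case (insert a I)
  have "mat N N (\<lambda>rc. \<Sum>i\<in>insert a I. X i $$ rc) = X a + mat N N (\<lambda>rc. \<Sum>i\<in>I. X i $$ rc)"
    using insert by (intro eq_matI) auto
  then show ?case using insert lie_closure.add by auto
qed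

lemma lie_closure_real_smult:
  "A \<in> lie_closure N G \<Longrightarrow> a \<in> \<real> \<Longrightarrow> a \<cdot>\<^sub>m A \<in> lie_closure N G"
  by (metis Reals_cases lie_closure.smult)

text \<open>
  Z_S X_M and Z_T X_M' commute up to the sign (-1)^(|T \<inter> M| + |S \<inter> M'|); when they
  anticommute, their bracket is \<plusminus>2 Z_(S \<triangle> T) X_(M \<triangle> M').
\<close>

lemma anticommuting_bracket_in_lie_closure:
  assumes S: "S \<subseteq> {..<n}" "T \<subseteq> {..<n}" and M: "M \<subseteq> {..<n}" "M' \<subseteq> {..<n}"
    and A: "diag_flip (2^n) (z_sign S) M \<in> lie_closure (2^n) G"
    and B: "diag_flip (2^n) (z_sign T) M' \<in> lie_closure (2^n) G"
    and anti: "parity_sign (T \<inter> M) \<noteq> parity_sign (S \<inter> M')"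
  shows "diag_flip (2^n) (z_sign (sym_diff S T)) (sym_diff M M') \<in> lie_closure (2^n) G"
proof -
  have f: "finite S" "finite T" "finite M" "finite M'" using S M finite_subset by blast+
  define e where "e = parity_sign (T \<inter> M)"
  have e': "parity_sign (S \<inter> M') = - e" and e_sq: "e * e = 1" and e_real: "e \<in> \<real>"
    using anti unfolding e_def parity_sign_if by (auto split: if_splits)
  have sym: "sym_diff M' M = sym_diff M M'" by blast
  have "diag_flip (2^n) (z_sign S) M * diag_flip (2^n) (z_sign T) M'
      - diag_flip (2^n) (z_sign T) M' * diag_flip (2^n) (z_sign S) M
      = diag_flip (2^n) (\<lambda>r. 2 * e * z_sign (sym_diff S T) r) (sym_diff M M')"
    unfolding diag_flip_mult[OF M] diag_flip_mult[OF M(2) M(1)] sym diag_flip_diff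
    using f e' by (intro diag_flip_cong)
      (simp add: z_sign_flip_bits e_def z_sign_mult[symmetric] algebra_simps)
  then have "diag_flip (2^n) (\<lambda>r. 2 * e * z_sign (sym_diff S T) r) (sym_diff M M')
      \<in> lie_closure (2^n) G"
    using A B lie_closure.bracket by metis
  then have "(e / 2) \<cdot>\<^sub>m diag_flip (2^n) (\<lambda>r. 2 * e * z_sign (sym_diff S T) r) (sym_diff M M')
      \<in> lie_closure (2^n) G"
    using e_real by (intro lie_closure_real_smult) auto
  also have "(e / 2) \<cdot>\<^sub>m diag_flip (2^n) (\<lambda>r. 2 * e * z_sign (sym_diff S T) r) (sym_diff M M')
      = diag_flip (2^n) (z_sign (sym_diff S T)) (sym_diff M M')"
    unfolding diag_flip_smult by (intro diag_flip_cong) (simp add: e_sq flip: mult.assoc)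
  finally show ?thesis .
qed

lemma odd_card_sym_diff_singleton:
  "finite X \<Longrightarrow> odd (card (sym_diff X {b})) \<longleftrightarrow> even (card X)"
  by (cases "b \<in> X") (auto simp: card_Diff_singleton Diff_insert_absorb insert_absorb
      simp flip: Un_Diff[of X "{b}"] insert_is_Un)

locale zx_pairs_in_closure =
  fixes n :: nat and G :: "complex mat set"
  assumes pair_in_closure:
    "\<And>i j. i < n \<Longrightarrow> j < n \<Longrightarrow> i \<noteq> j \<Longrightarrow> diag_flip (2^n) (z_sign {j}) {i,j} \<in> lie_closure (2^n) G"
begin

definition generated :: "nat set \<Rightarrow> nat set \<Rightarrow> bool" where
  "generated S M \<longleftrightarrow> diag_flip (2^n) (z_sign S) M \<in> lie_closure (2^n) G"

lemma generated_bracket: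
  assumes "S \<subseteq> {..<n}" "T \<subseteq> {..<n}" "M \<subseteq> {..<n}" "M' \<subseteq> {..<n}"
    and "generated S M" "generated T M'"
    and "parity_sign (T \<inter> M) \<noteq> parity_sign (S \<inter> M')"
  shows "generated (sym_diff S T) (sym_diff M M')"
  using assms anticommuting_bracket_in_lie_closure unfolding generated_def by blast

lemma generated_shift:
  assumes "S \<subseteq> {..<n}" "i < n" "j < n" "c < n" "generated S {i,c}"
    and "c \<in> S" "i \<notin> S" "j \<notin> S" "j \<noteq> i" "j \<noteq> c"
  shows "generated (insert j S) {i,j}"
proof -
  have "i \<noteq> c" using assms by auto
  moreover have "generated {j} {c,j}"
    using assms pair_in_closure unfolding generated_def by auto
  moreover have "parity_sign ({j} \<inter> {i,c}) \<noteq> parity_sign (S \<inter> {c,j})"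
    using assms by (simp add: parity_sign_def)
  ultimately have "generated (sym_diff S {j}) (sym_diff {i,c} {c,j})"
    using assms by (intro generated_bracket) auto
  moreover have "sym_diff S {j} = insert j S" "sym_diff {i,c} {c,j} = {i,j}"
    using assms \<open>i \<noteq> c\<close> by auto
  ultimately show ?thesis by simp
qed

lemma generated_pair_insert:
  assumes "R \<subseteq> {..<n}" "i < n" "j < n" "i \<noteq> j" "i \<notin> R" "j \<notin> R"
  shows "generated (insert j R) {i,j}"
proof -
  have "finite R" using assms(1) finite_subset by blast
  then show ?thesis using assms
  proof (induction R arbitrary: j rule: finite_induct)
    case empty
    then show ?case using pair_in_closure by (simp add: generated_def)
  next
    case (insert c R)
    then have "generated (insert c R) {i,c}" by auto
    then show ?case using insert by (intro generated_shift[where S = "insert c R" and c = c]) auto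
  qed
qed

lemma generated_pair:
  assumes "i < n" "j < n" "i \<noteq> j" "S \<subseteq> {..<n}" "odd (card (S \<inter> {i,j}))"
  shows "generated S {i,j}"
proof -
  consider "i \<in> S" "j \<notin> S" | "j \<in> S" "i \<notin> S"
    using assms(3,5) by (cases "i \<in> S"; cases "j \<in> S") (auto simp: Int_absorb1)
  then show ?thesis
  proof cases
    case 1
    then have "generated (insert i (S - {i})) {j,i}"
      using assms by (intro generated_pair_insert) auto
    then show ?thesis using 1 by (simp add: insert_absorb insert_commute)
  next
    case 2
    then have "generated (insert j (S - {j})) {i,j}"
      using assms by (intro generated_pair_insert) auto
    then show ?thesis using 2 by (simp add: insert_absorb)
  qed
qed


lemma generated_even_step:
  assumes M0: "M0 \<subseteq> {..<n}" "M0 \<noteq> {}" and ab: "a < n" "b < n" "a \<noteq> b" "a \<notin> M0" "b \<notin> M0"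
    and S: "S \<subseteq> {..<n}" "odd (card (S \<inter> (M0 \<union> {a,b})))"
    and IH: "\<And>S'. S' \<subseteq> {..<n} \<Longrightarrow> odd (card (S' \<inter> M0)) \<Longrightarrow> generated S' M0"
  shows "generated S (M0 \<union> {a,b})"
proof -
  have fin: "finite S" "finite M0" using S M0 finite_subset by blast+
  have split: "card (S \<inter> (M0 \<union> {a,b})) = card (S \<inter> M0) + card (S \<inter> {a,b})"
    unfolding Int_Un_distrib using fin ab by (intro card_Un_disjoint) auto
  have ab_part: "sym_diff S T \<inter> {a,b} = sym_diff (S \<inter> {a,b}) {b}" if "T \<inter> {a,b} = {b}" for T
    using that by blast
  text \<open>Choose T so that Z_T X_a X_b anticommutes with Z_(S \<triangle> T) X_M0 and |(S \<triangle> T) \<inter> M0|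
    is odd; the bracket of the two is then Z_S X_(M0 \<union> {a,b}) up to a real factor.\<close>
  obtain T where T: "T \<subseteq> {..<n}" "T \<inter> {a,b} = {b}"
    and odd_T: "odd (card (sym_diff S T \<inter> M0))"
    and anti: "parity_sign (T \<inter> M0) \<noteq> parity_sign (sym_diff S T \<inter> {a,b})"
  proof (cases "even (card (S \<inter> {a,b}))")
    case True
    have "sym_diff S {b} \<inter> M0 = S \<inter> M0" using ab by blast
    moreover have "odd (card (S \<inter> M0))" using S(2) split True by simp
    moreover have "odd (card (sym_diff S {b} \<inter> {a,b}))"
      using ab_part[of "{b}"] odd_card_sym_diff_singleton[of "S \<inter> {a,b}" b] True fin ab by simp
    moreover have "{b} \<inter> M0 = {}" "{b} \<inter> {a,b} = {b}" using ab by blast+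
    ultimately show thesis using ab by (intro that[of "{b}"]) (simp_all add: parity_sign_if)
  next
    case False
    then obtain c where c: "c \<in> M0" using M0(2) by blast
    have bc: "{b,c} \<inter> M0 = {c}" "{b,c} \<inter> {a,b} = {b}" using ab c by blast+
    have "sym_diff S {b,c} \<inter> M0 = sym_diff (S \<inter> M0) {c}" using ab c by blast
    moreover have "even (card (S \<inter> M0))" using S(2) split False by simp
    ultimately have "odd (card (sym_diff S {b,c} \<inter> M0))"
      using odd_card_sym_diff_singleton[of "S \<inter> M0" c] fin by simp
    moreover have "even (card (sym_diff S {b,c} \<inter> {a,b}))"
      using ab_part[OF bc(2)] odd_card_sym_diff_singleton[of "S \<inter> {a,b}" b] False fin by simp
    moreover have "{b,c} \<subseteq> {..<n}" using ab c M0 by auto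
    ultimately show thesis using bc by (intro that[of "{b,c}"]) (simp_all add: parity_sign_if)
  qed
  have ST: "sym_diff S T \<subseteq> {..<n}" using S T by blast
  have "generated (sym_diff S T) M0" using IH[OF ST odd_T] .
  moreover have "generated T {a,b}" using T ab by (intro generated_pair) auto
  ultimately have "generated (sym_diff (sym_diff S T) T) (sym_diff M0 {a,b})"
    using anti by (rule generated_bracket[OF ST T(1) M0(1), rotated]) (use ab in auto)
  moreover have "sym_diff (sym_diff S T) T = S" "sym_diff M0 {a,b} = M0 \<union> {a,b}"
    using ab by blast+
  ultimately show ?thesis by simp
qed

lemma generated_even:
  assumes "M \<subseteq> {..<n}" "even (card M)" "S \<subseteq> {..<n}" "odd (card (S \<inter> M))"
  shows "generated S M"
  using assms
proof (induction "card M" arbitrary: M S rule: less_induct)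
  case less
  have fin: "finite M" using less.prems finite_subset by blast
  have "M \<noteq> {}" using less.prems(4) by (metis card.empty even_zero inf_bot_right)
  then have "card M \<noteq> 0" using fin by simp
  then have card2: "card M \<ge> 2" using less.prems(2) by presburger
  show ?case
  proof (cases "card M = 2")
    case True
    then obtain a b where "M = {a,b}" "a \<noteq> b" by (meson card_2_iff)
    then show ?thesis using less.prems generated_pair[of a b S] by auto
  next
    case False
    obtain a b where ab: "a \<in> M" "b \<in> M" "a \<noteq> b"
      using card2 card_le_Suc0_iff_eq[OF fin] by fastforce
    define M0 where "M0 = M - {a,b}"
    have M_eq: "M = M0 \<union> {a,b}" unfolding M0_def using ab by blast
    have card_M0: "card M0 = card M - 2" unfolding M0_def using ab fin by (simp add: card_Diff_subset)
    have "card M0 \<noteq> 0" using card_M0 card2 False by linarith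
    then have M0_ne: "M0 \<noteq> {}" by (metis card.empty)
    have M0: "M0 \<subseteq> {..<n}" "even (card M0)" "card M0 < card M"
      using less.prems card_M0 card2 by (auto simp: M0_def)
    have "generated S (M0 \<union> {a,b})"
    proof (rule generated_even_step)
      show "a \<notin> M0" "b \<notin> M0" by (simp_all add: M0_def)
      show "odd (card (S \<inter> (M0 \<union> {a,b})))" using less.prems(4) M_eq by simp
      show "S' \<subseteq> {..<n} \<Longrightarrow> odd (card (S' \<inter> M0)) \<Longrightarrow> generated S' M0" for S'
        using less.hyps[OF M0(3) M0(1,2)] by blast
    qed (use less.prems ab M0 M0_ne in auto)
    then show ?thesis using M_eq by simp
  qed
qed

end

lemma z_sign_expansion_odd:
  assumes M: "M \<subseteq> {..<n}" and odd: "\<And>r. r < 2^n \<Longrightarrow> \<phi> (flip_bits M r) = - \<phi> r"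
    and r: "r < 2^n"
  shows "\<phi> r = (\<Sum>S\<in>Pow {..<n}. (if odd (card (S \<inter> M)) then z_coeff n \<phi> S else 0) * z_sign S r)"
proof -
  have fin: "finite M" "\<And>S. S \<in> Pow {..<n} \<Longrightarrow> finite S"
    using M finite_subset by blast+
  have "\<phi> (flip_bits M r) = (\<Sum>S\<in>Pow {..<n}. z_coeff n \<phi> S * z_sign S (flip_bits M r))"
    using flip_bits_less[OF M r] by (rule z_sign_expansion)
  also have "\<dots> = (\<Sum>S\<in>Pow {..<n}. z_coeff n \<phi> S * parity_sign (S \<inter> M) * z_sign S r)"
    using fin by (intro sum.cong refl) (simp add: z_sign_flip_bits)
  finally have flipped: "\<phi> (flip_bits M r) = \<dots>" .
  have "\<phi> r = (\<phi> r - \<phi> (flip_bits M r)) / 2" using odd[OF r] by simp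
  also have "\<dots> = (\<Sum>S\<in>Pow {..<n}. z_coeff n \<phi> S * ((1 - parity_sign (S \<inter> M)) / 2) * z_sign S r)"
    unfolding flipped z_sign_expansion[OF r, of \<phi>]
    by (simp add: sum_subtractf[symmetric] sum_divide_distrib algebra_simps)
  also have "\<dots> = (\<Sum>S\<in>Pow {..<n}. (if odd (card (S \<inter> M)) then z_coeff n \<phi> S else 0) * z_sign S r)"
    by (intro sum.cong refl) (simp add: parity_sign_if)
  finally show ?thesis .
qed

context zx_pairs_in_closure
begin

lemma diag_flip_odd_in_lie_closure:
  assumes M: "M \<subseteq> {..<n}" "even (card M)"
    and real: "\<And>r. r < 2^n \<Longrightarrow> \<phi> r \<in> \<real>"
    and odd: "\<And>r. r < 2^n \<Longrightarrow> \<phi> (flip_bits M r) = - \<phi> r"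
  shows "diag_flip (2^n) \<phi> M \<in> lie_closure (2^n) G"
proof -
  define d where "d S = (if odd (card (S \<inter> M)) then z_coeff n \<phi> S else 0)" for S
  have "diag_flip (2^n) \<phi> M
      = mat (2^n) (2^n) (\<lambda>rc. \<Sum>S\<in>Pow {..<n}. (d S \<cdot>\<^sub>m diag_flip (2^n) (z_sign S) M) $$ rc)"
    by (rule eq_matI)
      (auto simp: diag_flip_index d_def z_sign_expansion_odd[of M n \<phi>, OF M(1) odd] sum_distrib_left)
  also have "\<dots> \<in> lie_closure (2^n) G"
  proof (rule lie_closure_entrywise_sum)
    fix S assume S: "S \<in> Pow {..<n}"
    show "d S \<cdot>\<^sub>m diag_flip (2^n) (z_sign S) M \<in> lie_closure (2^n) G"
    proof (cases "odd (card (S \<inter> M))")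
      case True
      then have "generated S M" using generated_even M S by blast
      then show ?thesis
        using z_coeff_real[OF real] unfolding generated_def
        by (intro lie_closure_real_smult) (auto simp: d_def)
    next
      case False
      then show ?thesis using lie_closure.zero by (simp add: d_def diag_flip_smult diag_flip_zero)
    qed
  qed auto
  finally show ?thesis .
qed

lemma so_centraliser_subset_lie_closure:
  assumes so: "g \<in> so_mat (2^n)" and commute: "g * Z_all n = Z_all n * g"
  shows "g \<in> lie_closure (2^n) G"
proof -
  have gc: "g \<in> carrier_mat (2^n) (2^n)" using so by (simp add: so_mat_def)
  have parity: "g $$ (r,c) = 0" if "r < 2^n" "c < 2^n" "z_sign {..<n} r \<noteq> z_sign {..<n} c" for r c
    using commute that unfolding Z_all_eq_mat_diag commute_mat_diag_iff[OF gc] by blast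
  have "mat (2^n) (2^n) (\<lambda>rc. \<Sum>M\<in>Pow {..<n}. diag_flip (2^n) (\<lambda>r. g $$ (r, flip_bits M r)) M $$ rc)
      \<in> lie_closure (2^n) G"
  proof (rule lie_closure_entrywise_sum)
    fix M assume "M \<in> Pow {..<n}"
    then have M: "M \<subseteq> {..<n}" and fM: "finite M" using finite_subset by auto
    show "diag_flip (2^n) (\<lambda>r. g $$ (r, flip_bits M r)) M \<in> lie_closure (2^n) G"
    proof (cases "even (card M) \<and> M \<noteq> {}")
      case True
      show ?thesis
      proof (rule diag_flip_odd_in_lie_closure)
        fix r :: nat assume r: "r < 2^n"
        show "g $$ (r, flip_bits M r) \<in> \<real>" using so_matD(1)[OF so r flip_bits_less[OF M r]] .
        show "g $$ (flip_bits M r, flip_bits M (flip_bits M r)) = - g $$ (r, flip_bits M r)"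
          using so_matD(2)[OF so r flip_bits_less[OF M r]] fM by simp
      qed (use M True in auto)
    next
      case False
      text \<open>Diagonal entries of a skew matrix vanish; an odd number of flips changes the
        eigenvalue of Z^n.\<close>
      have "g $$ (r, flip_bits M r) = 0" if r: "r < 2^n" for r
      proof (cases "M = {}")
        case True
        then show ?thesis using so_matD(2)[OF so r r] by simp
      next
        case False
        then have "odd (card M)" using \<open>\<not> (even (card M) \<and> M \<noteq> {})\<close> by blast
        then have "z_sign {..<n} (flip_bits M r) = - z_sign {..<n} r"
          using z_sign_flip_bits[of "{..<n}" M r] fM M by (simp add: parity_sign_if Int_absorb1)
        then show ?thesis
          using parity[OF r flip_bits_less[OF M r]] z_sign_nonzero[of "{..<n}" r] by auto
      qed
      then show ?thesis
        using lie_closure.zero by (simp add: diag_flip_cong[of _ _ "\<lambda>_. 0"] diag_flip_zero)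
    qed
  qed auto
  then show ?thesis using diag_flip_decomposition[OF gc] by simp
qed

end

lemma a2pi_eq_lie_closure:
  "a2pi n = lie_closure (2^n) {diag_flip (2^n) (z_sign {j}) {i,j} | i j. i < n \<and> j < n \<and> i \<noteq> j}"
proof -
  let ?XY = "{two_site n PX i PY j | i j. i \<in> {1..n} \<and> j \<in> {1..n} \<and> i \<noteq> j}"
  have XY: "(\<lambda>P. \<i> \<cdot>\<^sub>m P) ` ?XY = {diag_flip (2^n) (z_sign {j}) {i,j} | i j. i < n \<and> j < n \<and> i \<noteq> j}"
  proof (intro equalityI subsetI)
    fix A assume "A \<in> (\<lambda>P. \<i> \<cdot>\<^sub>m P) ` ?XY"
    then obtain i j where ij: "i \<in> {1..n}" "j \<in> {1..n}" "i \<noteq> j"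
      and "A = \<i> \<cdot>\<^sub>m two_site n PX i PY j" by blast
    then have "A = diag_flip (2^n) (z_sign {j-1}) {i-1, j-1}" by (simp add: i_two_site_XY)
    moreover have "i - 1 < n" "j - 1 < n" "i - 1 \<noteq> j - 1" using ij by auto
    ultimately show "A \<in> {diag_flip (2^n) (z_sign {j}) {i,j} | i j. i < n \<and> j < n \<and> i \<noteq> j}"
      by blast
  next
    fix A assume "A \<in> {diag_flip (2^n) (z_sign {j}) {i,j} | i j. i < n \<and> j < n \<and> i \<noteq> j}"
    then obtain i j where ij: "i < n" "j < n" "i \<noteq> j"
      and "A = diag_flip (2^n) (z_sign {j}) {i,j}" by blast
    then have "A = \<i> \<cdot>\<^sub>m two_site n PX (Suc i) PY (Suc j)"
      using i_two_site_XY[of "Suc i" n "Suc j"] by simp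
    moreover have "two_site n PX (Suc i) PY (Suc j) \<in> ?XY" using ij by force
    ultimately show "A \<in> (\<lambda>P. \<i> \<cdot>\<^sub>m P) ` ?XY" by blast
  qed
  have YX: "{two_site n PY i PX j | i j. i \<in> {1..n} \<and> j \<in> {1..n} \<and> i \<noteq> j} = ?XY"
    using two_site_swap by blast
  show ?thesis unfolding a2pi_def Lie_gen_def YX Un_absorb XY ..
qed

theorem mainTheorem19:
  fixes n :: nat
  assumes "n \<ge> 2"
  shows "a2pi n = {g \<in> so_mat (2^n). g * Z_all n = Z_all n * g}"
proof -
  define G where "G = {diag_flip (2^n) (z_sign {j}) {i,j} | i j. i < n \<and> j < n \<and> i \<noteq> j}"
  interpret zx_pairs_in_closure n G
    by unfold_locales (auto simp: G_def intro: lie_closure.gen)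
  have "G \<subseteq> {g \<in> so_mat (2^n). g * Z_all n = Z_all n * g}"
  proof
    fix A assume "A \<in> G"
    then obtain i j where "i < n" "j < n" "i \<noteq> j" "A = diag_flip (2^n) (z_sign {j}) {i,j}"
      by (auto simp: G_def)
    then show "A \<in> {g \<in> so_mat (2^n). g * Z_all n = Z_all n * g}"
      using z_flip_in_so_centraliser[of "{j}" n "{i,j}"] by auto
  qed
  then have "lie_closure (2^n) G \<subseteq> {g \<in> so_mat (2^n). g * Z_all n = Z_all n * g}"
    by (intro lie_closure_subset_so_centraliser) (simp_all add: Z_all_eq_mat_diag)
  moreover have "{g \<in> so_mat (2^n). g * Z_all n = Z_all n * g} \<subseteq> lie_closure (2^n) G"
    using so_centraliser_subset_lie_closure by blast
  ultimately show ?thesis unfolding a2pi_eq_lie_closure G_def by blast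
qed

end
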